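(* Let $M$ be a $4$-dimensional Riemannian manifold with metric $g$ and affinor structure $q$ (a $(1,1)$-tensor field) whose components in local coordinates $(x^1,x^2,x^3,x^4)$ are $$g_{ij}=\begin{pmatrix} A & B & C & B\\ B & A & B & C\\ C & B & A & B\\ B & C & B & A\end{pmatrix},\qquad q_i^{\ j}=\begin{pmatrix} 0&1&0&0\\0&0&1&0\\0&0&0&1\\1&0&0&0\end{pmatrix},$$ where $A,B,C$ are smooth functions with $0<B<C<A$, and suppose $q$ is parallel, i.e. $\nabla q=0$ where $\nabla$ is the Levi-Civita connection of $g$. Let $p\in M$ and let $x=(x^1,x^2,x^3,x^4)\in T_pM$ satisfy $((x^1-x^3)^2+(x^2-x^4)^2)(x^1-x^2+x^3-x^4)(x^1+x^2+x^3+x^4)\neq 0$ (so that $x,qx,q^2x,q^3x$ are linearly independent). Then the sectional curvatures of the $2$-planes $E_1=\{x,qx\}$, $E_3=\{q^3x,x\}$, $E_4=\{q^2x,qx\}$, $E_6=\{q^2x,q^3x\}$ are all equal, and the sectional curvatures of the $2$-planes $E_2=\{x,q^2x\}$ and $E_5=\{q^3x,qx\}$ are zero.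
   Context: $R$ denotes the Riemann curvature tensor of $\nabla$, $R(x,y)z=\nabla_x\nabla_yz-\nabla_y\nabla_xz-\nabla_{[x,y]}z$, with associated $(0,4)$-tensor $R(x,y,z,u)=g(R(x,y)z,u)$. The sectional curvature of the $2$-plane spanned by linearly independent $x,y\in T_pM$ is $\mu(\{x,y\};p)=\dfrac{R(x,y,x,y)}{g(x,x)g(y,y)-g(x,y)^2}$. The structure satisfies $q^4=\mathrm{id}$ and $g(qx,qy)=g(x,y)$. *)

theory Defs
  imports "HOL-Analysis.Analysis"
begin

text \<open>Local coordinates (x1,x2,x3,x4) on a chart: points are in real^4, indices are of type 4.\<close>

definition pd :: "4 \<Rightarrow> (real^4 \<Rightarrow> real) \<Rightarrow> real^4 \<Rightarrow> real" where
  "pd k f p = frechet_derivative f (at p) (axis k 1)"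

definition smooth_on :: "(real^4) set \<Rightarrow> (real^4 \<Rightarrow> real) \<Rightarrow> bool" where
  "smooth_on U f \<longleftrightarrow> (\<forall>ks::4 list. \<forall>p\<in>U. (foldr pd ks f) differentiable (at p))"

definition gmat :: "(real^4 \<Rightarrow> real) \<Rightarrow> (real^4 \<Rightarrow> real) \<Rightarrow> (real^4 \<Rightarrow> real) \<Rightarrow> real^4 \<Rightarrow> real^4^4" where
  "gmat A B C p = (\<chi> i j. if j - i = 0 then A p else if j - i = 2 then C p else B p)"

definition ginv :: "(real^4 \<Rightarrow> real) \<Rightarrow> (real^4 \<Rightarrow> real) \<Rightarrow> (real^4 \<Rightarrow> real) \<Rightarrow> real^4 \<Rightarrow> real^4^4" where
  "ginv A B C p = matrix_inv (gmat A B C p)"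

text \<open>Affinor components q_i^j (row i, column j): q_i^j = 1 iff j = i + 1 (mod 4).\<close>
definition qcomp :: "4 \<Rightarrow> 4 \<Rightarrow> real" where
  "qcomp i j = (if j = i + 1 then 1 else 0)"

definition qact :: "real^4 \<Rightarrow> real^4" where
  "qact x = (\<chi> j. \<Sum>i\<in>UNIV. qcomp i j * x $ i)"

definition christoffel ::
  "(real^4 \<Rightarrow> real) \<Rightarrow> (real^4 \<Rightarrow> real) \<Rightarrow> (real^4 \<Rightarrow> real) \<Rightarrow> 4 \<Rightarrow> 4 \<Rightarrow> 4 \<Rightarrow> real^4 \<Rightarrow> real" where
  "christoffel A B C k i j p =
     (\<Sum>l\<in>UNIV. ginv A B C p $ k $ l / 2 *
        (pd i (\<lambda>y. gmat A B C y $ j $ l) p + pd j (\<lambda>y. gmat A B C y $ i $ l) p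
         - pd l (\<lambda>y. gmat A B C y $ i $ j) p))"

definition nabla_q ::
  "(real^4 \<Rightarrow> real) \<Rightarrow> (real^4 \<Rightarrow> real) \<Rightarrow> (real^4 \<Rightarrow> real) \<Rightarrow> 4 \<Rightarrow> 4 \<Rightarrow> 4 \<Rightarrow> real^4 \<Rightarrow> real" where
  "nabla_q A B C k i j p =
     pd k (\<lambda>y. qcomp i j) p
     - (\<Sum>m\<in>UNIV. christoffel A B C m k i p * qcomp m j)
     + (\<Sum>m\<in>UNIV. christoffel A B C j k m p * qcomp i m)"

text \<open>Curvature components R(d_i,d_j)d_k = R_ijk^l d_l for
  R(x,y)z = nabla_x nabla_y z - nabla_y nabla_x z - nabla_[x,y] z.\<close>
definition curv ::
  "(real^4 \<Rightarrow> real) \<Rightarrow> (real^4 \<Rightarrow> real) \<Rightarrow> (real^4 \<Rightarrow> real) \<Rightarrow> 4 \<Rightarrow> 4 \<Rightarrow> 4 \<Rightarrow> 4 \<Rightarrow> real^4 \<Rightarrow> real" where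
  "curv A B C i j k l p =
     pd i (christoffel A B C l j k) p - pd j (christoffel A B C l i k) p
     + (\<Sum>m\<in>UNIV. christoffel A B C m j k p * christoffel A B C l i m p
                 - christoffel A B C m i k p * christoffel A B C l j m p)"

definition gform ::
  "(real^4 \<Rightarrow> real) \<Rightarrow> (real^4 \<Rightarrow> real) \<Rightarrow> (real^4 \<Rightarrow> real) \<Rightarrow> real^4 \<Rightarrow> real^4 \<Rightarrow> real^4 \<Rightarrow> real" where
  "gform A B C p x y = (\<Sum>i\<in>UNIV. \<Sum>j\<in>UNIV. gmat A B C p $ i $ j * x $ i * y $ j)"

definition R4 ::
  "(real^4 \<Rightarrow> real) \<Rightarrow> (real^4 \<Rightarrow> real) \<Rightarrow> (real^4 \<Rightarrow> real) \<Rightarrow> real^4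
    \<Rightarrow> real^4 \<Rightarrow> real^4 \<Rightarrow> real^4 \<Rightarrow> real^4 \<Rightarrow> real" where
  "R4 A B C p x y z u =
     gform A B C p (\<chi> l. \<Sum>i\<in>UNIV. \<Sum>j\<in>UNIV. \<Sum>k\<in>UNIV. x $ i * y $ j * z $ k * curv A B C i j k l p) u"

definition sectional ::
  "(real^4 \<Rightarrow> real) \<Rightarrow> (real^4 \<Rightarrow> real) \<Rightarrow> (real^4 \<Rightarrow> real) \<Rightarrow> real^4 \<Rightarrow> real^4 \<Rightarrow> real^4 \<Rightarrow> real" where
  "sectional A B C p x y =
     R4 A B C p x y x y / (gform A B C p x x * gform A B C p y y - (gform A B C p x y)\<^sup>2)"

end

theory Submission
  imports Defs
begin

text \<open>
  The components of \<open>q\<close> are constant, so \<open>\<nabla>q = 0\<close> says that the Christoffel symbols are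
  invariant under the cyclic index shift \<open>i \<mapsto> i + 1\<close> induced by \<open>q\<close>. So is the circulant
  metric, hence the components \<open>R\<^sub>i\<^sub>j\<^sub>k\<^sub>l\<close> of the curvature tensor are invariant under shifting
  \<open>k, l\<close>, and by pair symmetry \<open>R(qx, qy, qz, qu) = R(x, y, z, u)\<close>. Together with \<open>q\<^sup>4 = id\<close> this
  identifies the sectional curvatures of \<open>E\<^sub>1, E\<^sub>3, E\<^sub>4, E\<^sub>6\<close>, and
  \<open>R(x, q\<^sup>2x, x, q\<^sup>2x) = R(x, q\<^sup>2x, q\<^sup>2x, q\<^sup>4x) = -R(x, q\<^sup>2x, x, q\<^sup>2x)\<close> makes \<open>E\<^sub>2\<close> and \<open>E\<^sub>5\<close> flat.
  The symmetries of \<open>R\<^sub>i\<^sub>j\<^sub>k\<^sub>l\<close> are derived in coordinates: antisymmetry in \<open>k, l\<close> from the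
  compatibility of the Levi-Civita connection with \<open>g\<close> (using the explicit inverse of the
  circulant matrix and the symmetry of second partial derivatives), pair symmetry from the
  first Bianchi identity.
\<close>

lemma pd_eqI: "(f has_derivative D) (at p) \<Longrightarrow> pd k f p = D (axis k 1)"
  unfolding pd_def by (metis frechet_derivative_at)

lemma pd_transform_within_open:
  assumes "open S" "p \<in> S" "\<And>y. y \<in> S \<Longrightarrow> f y = g y"
  shows "pd k f p = pd k g p"
proof -
  have "(f has_derivative D) (at p) \<longleftrightarrow> (g has_derivative D) (at p)" for D
    using has_derivative_transform_within_open[OF _ assms(1,2)] assms(3) by (metis (no_types))
  then show ?thesis unfolding pd_def frechet_derivative_def by simp
qed

lemma pd_const: "pd k (\<lambda>y. c) p = 0"
  using pd_eqI[OF has_derivative_const] by simp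

lemma pd_add:
  assumes "f differentiable (at p)" "g differentiable (at p)"
  shows "pd k (\<lambda>y. f y + g y) p = pd k f p + pd k g p"
  using pd_eqI[OF has_derivative_add, OF assms[unfolded frechet_derivative_works]]
  by (simp add: pd_def)

lemma pd_diff:
  assumes "f differentiable (at p)" "g differentiable (at p)"
  shows "pd k (\<lambda>y. f y - g y) p = pd k f p - pd k g p"
  using pd_eqI[OF has_derivative_diff, OF assms[unfolded frechet_derivative_works]]
  by (simp add: pd_def)

lemma pd_mult:
  fixes f g :: "real^4 \<Rightarrow> real"
  assumes "f differentiable (at p)" "g differentiable (at p)"
  shows "pd k (\<lambda>y. f y * g y) p = pd k f p * g p + f p * pd k g p"
  using pd_eqI[OF has_derivative_mult, OF assms[unfolded frechet_derivative_works]]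
  by (simp add: pd_def)

lemma pd_divide_const:
  fixes f :: "real^4 \<Rightarrow> real"
  assumes "f differentiable (at p)"
  shows "pd k (\<lambda>y. f y / c) p = pd k f p / c"
  using pd_mult[OF assms differentiable_const, of k "1/c"] by (simp add: pd_const)

lemma pd_sum:
  fixes f :: "'i \<Rightarrow> real^4 \<Rightarrow> real"
  assumes "finite I" "\<And>i. i \<in> I \<Longrightarrow> f i differentiable (at p)"
  shows "pd k (\<lambda>y. \<Sum>i\<in>I. f i y) p = (\<Sum>i\<in>I. pd k (f i) p)"
proof -
  have "((\<lambda>y. \<Sum>i\<in>I. f i y) has_derivative (\<lambda>h. \<Sum>i\<in>I. frechet_derivative (f i) (at p) h)) (at p)"
    using assms by (intro has_derivative_sum) (auto simp: frechet_derivative_works)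
  from pd_eqI[OF this] show ?thesis by (simp add: pd_def)
qed

lemma smooth_on_differentiable: "smooth_on U f \<Longrightarrow> y \<in> U \<Longrightarrow> f differentiable (at y)"
  unfolding smooth_on_def by (drule spec[of _ "[]"]) simp

lemma smooth_on_pd: "smooth_on U f \<Longrightarrow> smooth_on U (pd k f)"
  unfolding smooth_on_def
proof (intro allI ballI)
  fix ks :: "4 list" and y assume "\<forall>ks. \<forall>p\<in>U. foldr pd ks f differentiable (at p)" "y \<in> U"
  then have "foldr pd (ks @ [k]) f differentiable (at y)" by blast
  then show "foldr pd ks (pd k f) differentiable (at y)" by simp
qed

section \<open>Symmetry of second partial derivatives\<close>

definition second_diff :: "(real^4 \<Rightarrow> real) \<Rightarrow> real^4 \<Rightarrow> 4 \<Rightarrow> 4 \<Rightarrow> real \<Rightarrow> real" where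
  "second_diff f p i j h =
     f (p + h *\<^sub>R axis i 1 + h *\<^sub>R axis j 1) - f (p + h *\<^sub>R axis i 1) - f (p + h *\<^sub>R axis j 1) + f p"

lemma second_diff_commute: "second_diff f p i j h = second_diff f p j i h"
  unfolding second_diff_def by (simp add: algebra_simps)

lemma has_derivative_along_line:
  fixes f :: "real^4 \<Rightarrow> real"
  assumes "f differentiable (at (c + t *\<^sub>R v))"
  shows "((\<lambda>s. f (c + s *\<^sub>R v)) has_derivative (\<lambda>s. s * frechet_derivative f (at (c + t *\<^sub>R v)) v))
           (at t within X)"
proof -
  let ?D = "frechet_derivative f (at (c + t *\<^sub>R v))"
  have "((\<lambda>s. c + s *\<^sub>R v) has_derivative (\<lambda>s. s *\<^sub>R v)) (at t within X)"
    by (auto intro!: derivative_eq_intros)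
  from has_derivative_in_compose[OF this has_derivative_at_withinI,
      OF assms[unfolded frechet_derivative_works]]
  have "((\<lambda>s. f (c + s *\<^sub>R v)) has_derivative (\<lambda>s. ?D (s *\<^sub>R v))) (at t within X)"
    by (simp add: o_def)
  moreover have "linear ?D"
    using assms frechet_derivative_works has_derivative_linear by blast
  ultimately show ?thesis by (simp add: linear_scale)
qed

lemma second_diff_mean_value:
  fixes f :: "real^4 \<Rightarrow> real"
  assumes "0 < h"
    and df: "\<And>s t. 0 \<le> s \<Longrightarrow> s \<le> h \<Longrightarrow> 0 \<le> t \<Longrightarrow> t \<le> h \<Longrightarrow>
               f differentiable (at (p + s *\<^sub>R axis i 1 + t *\<^sub>R axis j 1))"
  obtains \<xi> where "0 < \<xi>" "\<xi> < h"
    "second_diff f p i j h = h * (pd i f (p + \<xi> *\<^sub>R axis i 1 + h *\<^sub>R axis j 1) - pd i f (p + \<xi> *\<^sub>R axis i 1))"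
proof -
  let ?ei = "axis i 1 :: real^4" and ?ej = "axis j 1 :: real^4"
  define \<phi> where "\<phi> s = f ((p + h *\<^sub>R ?ej) + s *\<^sub>R ?ei) - f (p + s *\<^sub>R ?ei)" for s
  have "(\<phi> has_derivative (\<lambda>s. s * pd i f ((p + h *\<^sub>R ?ej) + t *\<^sub>R ?ei) - s * pd i f (p + t *\<^sub>R ?ei)))
          (at t within {0..h})" if "0 \<le> t" "t \<le> h" for t
  proof -
    have "f differentiable (at ((p + h *\<^sub>R ?ej) + t *\<^sub>R ?ei))"
      using df[of t h] that \<open>0 < h\<close> by (simp add: algebra_simps)
    moreover have "f differentiable (at (p + t *\<^sub>R ?ei))"
      using df[of t 0] that by simp
    ultimately show ?thesis
      unfolding \<phi>_def pd_def by (intro has_derivative_diff has_derivative_along_line)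
  qed
  from mvt_simple[OF \<open>0 < h\<close> this] obtain \<xi> where "\<xi> \<in> {0<..<h}"
    "\<phi> h - \<phi> 0 = (h - 0) * pd i f ((p + h *\<^sub>R ?ej) + \<xi> *\<^sub>R ?ei) - (h - 0) * pd i f (p + \<xi> *\<^sub>R ?ei)"
    by blast
  then show ?thesis
    by (intro that[of \<xi>]) (auto simp: \<phi>_def second_diff_def algebra_simps)
qed

lemma second_diff_approx:
  fixes f :: "real^4 \<Rightarrow> real"
  assumes hD: "(pd i f has_derivative D) (at p)" and "0 < h"
    and approx: "\<And>v. norm v \<le> 2 * h \<Longrightarrow> \<bar>pd i f (p + v) - pd i f p - D v\<bar> \<le> \<epsilon> * h"
    and df: "\<And>y. norm (y - p) \<le> 2 * h \<Longrightarrow> f differentiable (at y)"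
  shows "\<bar>second_diff f p i j h - h\<^sup>2 * pd j (pd i f) p\<bar> \<le> 2 * \<epsilon> * h\<^sup>2"
proof -
  let ?ei = "axis i 1 :: real^4" and ?ej = "axis j 1 :: real^4" and ?a = "pd j (pd i f) p"
  have "f differentiable (at (p + s *\<^sub>R ?ei + t *\<^sub>R ?ej))"
    if "0 \<le> s" "s \<le> h" "0 \<le> t" "t \<le> h" for s t
    using df norm_triangle_ineq[of "s *\<^sub>R ?ei" "t *\<^sub>R ?ej"] that by (simp add: add.assoc)
  then obtain \<xi> where \<xi>: "0 < \<xi>" "\<xi> < h" and diff:
    "second_diff f p i j h = h * (pd i f (p + \<xi> *\<^sub>R ?ei + h *\<^sub>R ?ej) - pd i f (p + \<xi> *\<^sub>R ?ei))"
    by (rule second_diff_mean_value[OF \<open>0 < h\<close>])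
  have "D (\<xi> *\<^sub>R ?ei + h *\<^sub>R ?ej) - D (\<xi> *\<^sub>R ?ei) = h * ?a"
    using linear_add[OF has_derivative_linear[OF hD]] linear_scale[OF has_derivative_linear[OF hD]]
      pd_eqI[OF hD] by simp
  moreover have "norm (\<xi> *\<^sub>R ?ei + h *\<^sub>R ?ej) \<le> 2 * h"
    using norm_triangle_ineq[of "\<xi> *\<^sub>R ?ei" "h *\<^sub>R ?ej"] \<xi> by simp
  note approx[OF this]
  moreover have "norm (\<xi> *\<^sub>R ?ei) \<le> 2 * h"
    using \<xi> by simp
  note approx[OF this]
  ultimately
  have "\<bar>pd i f (p + \<xi> *\<^sub>R ?ei + h *\<^sub>R ?ej) - pd i f (p + \<xi> *\<^sub>R ?ei) - h * ?a\<bar> \<le> 2 * \<epsilon> * h"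
    unfolding add.assoc abs_le_iff by linarith
  then have "h * \<bar>pd i f (p + \<xi> *\<^sub>R ?ei + h *\<^sub>R ?ej) - pd i f (p + \<xi> *\<^sub>R ?ei) - h * ?a\<bar> \<le> h * (2 * \<epsilon> * h)"
    using \<open>0 < h\<close> by (intro mult_left_mono) auto
  moreover have "second_diff f p i j h - h\<^sup>2 * ?a
      = h * (pd i f (p + \<xi> *\<^sub>R ?ei + h *\<^sub>R ?ej) - pd i f (p + \<xi> *\<^sub>R ?ei) - h * ?a)"
    unfolding diff by (simp add: power2_eq_square algebra_simps)
  ultimately show ?thesis
    using \<open>0 < h\<close> by (simp add: abs_mult power2_eq_square mult_ac)
qed

lemma second_diff_tendsto:
  fixes f :: "real^4 \<Rightarrow> real"
  assumes "open U" "p \<in> U" and df: "\<forall>y\<in>U. f differentiable (at y)"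
    and dpd: "pd i f differentiable (at p)"
  shows "((\<lambda>h. second_diff f p i j h / h\<^sup>2) \<longlongrightarrow> pd j (pd i f) p) (at_right 0)"
proof (rule tendstoI)
  fix e :: real assume "e > 0"
  let ?a = "pd j (pd i f) p"
  obtain r where r: "r > 0" "ball p r \<subseteq> U" using assms(1,2) open_contains_ball by blast
  define D where "D = frechet_derivative (pd i f) (at p)"
  have hD: "(pd i f has_derivative D) (at p)" unfolding D_def using dpd frechet_derivative_works by blast
  moreover have "e/8 > 0" using \<open>e > 0\<close> by simp
  ultimately obtain \<delta> where "\<delta> > 0" and \<delta>:
    "\<And>y. norm (y - p) < \<delta> \<Longrightarrow> norm (pd i f y - pd i f p - D (y - p)) \<le> e/8 * norm (y - p)"
    unfolding has_derivative_at_alt by blast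
  have "\<bar>second_diff f p i j h / h\<^sup>2 - ?a\<bar> < e" if h: "0 < h" "h < min (r/2) (\<delta>/2)" for h
  proof -
    have "\<bar>pd i f (p + v) - pd i f p - D v\<bar> \<le> e/4 * h" if "norm v \<le> 2 * h" for v
    proof -
      have "\<bar>pd i f (p + v) - pd i f p - D v\<bar> \<le> e/8 * norm v"
        using \<delta>[of "p + v"] that h by simp
      also have "\<dots> \<le> e/8 * (2 * h)"
        using that \<open>e > 0\<close> by (simp add: mult_left_mono)
      finally show ?thesis by simp
    qed
    moreover have "f differentiable (at y)" if "norm (y - p) \<le> 2 * h" for y
    proof -
      have "y \<in> ball p r"
        using that h by (simp add: dist_norm norm_minus_commute)
      then show ?thesis using r(2) df by blast
    qed
    ultimately have "\<bar>second_diff f p i j h - h\<^sup>2 * ?a\<bar> \<le> 2 * (e/4) * h\<^sup>2"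
      by (rule second_diff_approx[OF hD h(1)])
    moreover have "second_diff f p i j h / h\<^sup>2 - ?a = (second_diff f p i j h - h\<^sup>2 * ?a) / h\<^sup>2"
      using h(1) by (simp add: field_simps)
    moreover have "0 < e * h\<^sup>2" using h(1) \<open>e > 0\<close> by simp
    ultimately show ?thesis
      using h(1) by (simp add: pos_divide_less_eq)
  qed
  then show "\<forall>\<^sub>F h in at_right 0. dist (second_diff f p i j h / h\<^sup>2) ?a < e"
    unfolding eventually_at_right_field dist_real_def using r(1) \<open>\<delta> > 0\<close>
    by (intro exI[of _ "min (r/2) (\<delta>/2)"]) auto
qed

lemma pd_commute:
  fixes f :: "real^4 \<Rightarrow> real"
  assumes "open U" "p \<in> U" "\<forall>y\<in>U. f differentiable (at y)"
    and "pd i f differentiable (at p)" "pd j f differentiable (at p)"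
  shows "pd i (pd j f) p = pd j (pd i f) p"
  using tendsto_unique[OF trivial_limit_at_right_real
      second_diff_tendsto[OF assms(1-3,5), of i, unfolded second_diff_commute[of f p j i]]
      second_diff_tendsto[OF assms(1-4), of j]] .

section \<open>Circulant matrices\<close>

definition circulant :: "real \<Rightarrow> real \<Rightarrow> real \<Rightarrow> real^4^4" where
  "circulant a b c = (\<chi> i j. if j - i = 0 then a else if j - i = 2 then c else b)"

lemma gmat_circulant: "gmat A B C y = circulant (A y) (B y) (C y)"
  unfolding gmat_def circulant_def ..

lemma circulant_sym: "circulant a b c $ i $ j = circulant a b c $ j $ i"
  using exhaust_4[of i] exhaust_4[of j] unfolding circulant_def by auto

lemma circulant_shift: "circulant a b c $ (i + s) $ (j + s) = circulant a b c $ i $ j"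
  unfolding circulant_def by simp

lemma circulant_mult:
  "circulant a b c ** circulant x y z
     = circulant (a*x + 2*b*y + c*z) (b*x + (a+c)*y + b*z) (c*x + 2*b*y + a*z)"
  unfolding circulant_def vec_eq_iff matrix_matrix_mult_def forall_4 sum_4
  by (simp add: algebra_simps)

lemma circulant_one: "circulant 1 0 0 = mat 1"
  unfolding circulant_def vec_eq_iff mat_def forall_4 by simp

text \<open>The eigenvalues of \<open>circulant a b c\<close> are \<open>a + 2b + c\<close>, \<open>a - c\<close> (twice) and \<open>a - 2b + c\<close>.\<close>
definition circulant_inv :: "real \<Rightarrow> real \<Rightarrow> real \<Rightarrow> real^4^4" where
  "circulant_inv a b c =
     circulant ((1/(a + 2*b + c) + 2/(a - c) + 1/(a - 2*b + c)) / 4)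
               ((1/(a + 2*b + c) - 1/(a - 2*b + c)) / 4)
               ((1/(a + 2*b + c) - 2/(a - c) + 1/(a - 2*b + c)) / 4)"

lemma circulant_mult_commute: "circulant a b c ** circulant x y z = circulant x y z ** circulant a b c"
  unfolding circulant_mult by (simp add: algebra_simps)

lemma circulant_mult_inv:
  assumes "a + 2*b + c \<noteq> 0" "a - c \<noteq> 0" "a - 2*b + c \<noteq> 0"
  shows "circulant a b c ** circulant_inv a b c = mat 1"
proof -
  define u0 u1 u2 where "u0 = 1/(a + 2*b + c)" and "u1 = 1/(a - c)" and "u2 = 1/(a - 2*b + c)"
  have u: "(a + 2*b + c) * u0 = 1" "(a - c) * u1 = 1" "(a - 2*b + c) * u2 = 1"
    using assms by (simp_all add: u0_def u1_def u2_def)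
  have "a * ((u0 + 2*u1 + u2)/4) + 2*b * ((u0 - u2)/4) + c * ((u0 - 2*u1 + u2)/4)
       = ((a + 2*b + c) * u0 + 2 * ((a - c) * u1) + (a - 2*b + c) * u2) / 4"
    "b * ((u0 + 2*u1 + u2)/4) + (a + c) * ((u0 - u2)/4) + b * ((u0 - 2*u1 + u2)/4)
       = ((a + 2*b + c) * u0 - (a - 2*b + c) * u2) / 4"
    "c * ((u0 + 2*u1 + u2)/4) + 2*b * ((u0 - u2)/4) + a * ((u0 - 2*u1 + u2)/4)
       = ((a + 2*b + c) * u0 - 2 * ((a - c) * u1) + (a - 2*b + c) * u2) / 4"
    by (simp_all add: field_simps)
  note this[unfolded u]
  moreover have "circulant_inv a b c = circulant ((u0 + 2*u1 + u2)/4) ((u0 - u2)/4) ((u0 - 2*u1 + u2)/4)"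
    unfolding circulant_inv_def u0_def u1_def u2_def by simp
  ultimately show ?thesis
    by (simp add: circulant_mult circulant_one[symmetric])
qed

lemma matrix_inv_circulant:
  assumes "a + 2*b + c \<noteq> 0" "a - c \<noteq> 0" "a - 2*b + c \<noteq> 0"
  shows "matrix_inv (circulant a b c) = circulant_inv a b c"
  unfolding matrix_inv_def
proof (rule some_equality)
  note right = circulant_mult_inv[OF assms]
  then show "circulant a b c ** circulant_inv a b c = mat 1 \<and> circulant_inv a b c ** circulant a b c = mat 1"
    unfolding circulant_inv_def by (simp add: circulant_mult_commute)
  fix X assume X: "circulant a b c ** X = mat 1 \<and> X ** circulant a b c = mat 1"
  have "X = X ** (circulant a b c ** circulant_inv a b c)"
    by (simp add: right matrix_mul_rid)
  also have "\<dots> = circulant_inv a b c"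
    using X by (simp add: matrix_mul_assoc matrix_mul_lid)
  finally show "X = circulant_inv a b c" .
qed

lemma differentiable_circulant_entry:
  assumes "a differentiable F" "b differentiable F" "c differentiable F"
  shows "(\<lambda>y. circulant (a y) (b y) (c y) $ m $ n) differentiable F"
  using assms unfolding circulant_def by (cases "n = m"; cases "n - m = 2") simp_all

lemma qact_nth: "qact x $ j = x $ (j - 1)"
proof -
  have "(j = i + 1) = (i = j - 1)" for i :: 4 by auto
  then have "qcomp i j * x $ i = (if i = j - 1 then x $ i else 0)" for i
    unfolding qcomp_def by simp
  then show ?thesis unfolding qact_def by simp
qed

lemma qact_pow_nth: "(qact ^^ n) x $ j = x $ (j - of_nat n)"
  by (induction n arbitrary: j) (simp_all add: qact_nth algebra_simps)

lemma qact_pow4: "(qact ^^ 4) x = x"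
proof -
  have "i - of_nat 4 = i" for i :: 4 by simp
  then show ?thesis unfolding vec_eq_iff qact_pow_nth by presburger
qed

lemma sum_UNIV_shift: "(\<Sum>m\<in>UNIV. f m) = (\<Sum>m\<in>UNIV. f (m + a :: 'a::{finite, group_add}))"
  by (rule sum.reindex_bij_witness[where j="\<lambda>m. m - a" and i="\<lambda>m. m + a"]) auto

lemma gform_commute: "gform A B C p x y = gform A B C p y x"
  unfolding gform_def gmat_circulant
  by (subst sum.swap) (simp add: circulant_sym mult_ac)

lemma gform_qact: "gform A B C p (qact x) (qact y) = gform A B C p x y"
proof -
  have "gform A B C p (qact x) (qact y)
      = (\<Sum>i\<in>UNIV. \<Sum>j\<in>UNIV. gmat A B C p $ i $ j * x $ (i - 1) * y $ (j - 1))"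
    unfolding gform_def qact_nth ..
  also have "\<dots> = (\<Sum>i\<in>UNIV. \<Sum>j\<in>UNIV. gmat A B C p $ (i + 1) $ (j + 1) * x $ i * y $ j)"
    by (subst (1 2) sum_UNIV_shift[where a=1]) simp
  finally show ?thesis unfolding gform_def gmat_circulant circulant_shift .
qed

definition christoffel1 ::
  "(real^4 \<Rightarrow> real) \<Rightarrow> (real^4 \<Rightarrow> real) \<Rightarrow> (real^4 \<Rightarrow> real) \<Rightarrow> 4 \<Rightarrow> 4 \<Rightarrow> 4 \<Rightarrow> real^4 \<Rightarrow> real" where
  "christoffel1 A B C i j l y =
     (pd i (\<lambda>y. gmat A B C y $ j $ l) y + pd j (\<lambda>y. gmat A B C y $ i $ l) y
      - pd l (\<lambda>y. gmat A B C y $ i $ j) y) / 2"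

lemma christoffel_eq: "christoffel A B C k i j y = (\<Sum>l\<in>UNIV. ginv A B C y $ k $ l * christoffel1 A B C i j l y)"
  unfolding christoffel_def christoffel1_def by simp

lemma christoffel_commute: "christoffel A B C k i j = christoffel A B C k j i"
  unfolding christoffel_def by (rule ext) (simp add: gmat_circulant circulant_sym[of _ _ _ i j] add.commute)

lemma pd_gmat_eq_christoffel1:
  "pd i (\<lambda>y. gmat A B C y $ m $ l) p = christoffel1 A B C i m l p + christoffel1 A B C i l m p"
  unfolding christoffel1_def gmat_circulant by (simp add: circulant_sym[of _ _ _ l m] field_simps)

locale circulant_metric =
  fixes U :: "(real^4) set" and A B C :: "real^4 \<Rightarrow> real"
  assumes open_U: "open U"
    and smooth_A: "smooth_on U A" and smooth_B: "smooth_on U B" and smooth_C: "smooth_on U C"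
    and metric_pos: "\<And>y. y \<in> U \<Longrightarrow> 0 < B y \<and> B y < C y \<and> C y < A y"
begin

abbreviation g :: "4 \<Rightarrow> 4 \<Rightarrow> real^4 \<Rightarrow> real" where
  "g i j \<equiv> \<lambda>y. gmat A B C y $ i $ j"

lemma smooth_g: "smooth_on U (g i j)"
proof -
  have "g i j = (if j - i = 0 then A else if j - i = 2 then C else B)"
    by (rule ext) (simp add: gmat_def)
  then show ?thesis using smooth_A smooth_B smooth_C by simp
qed

lemma differentiable_g: "y \<in> U \<Longrightarrow> g i j differentiable (at y)"
  by (rule smooth_on_differentiable[OF smooth_g])

lemma differentiable_pd_g: "y \<in> U \<Longrightarrow> pd k (g i j) differentiable (at y)"
  by (rule smooth_on_differentiable[OF smooth_on_pd[OF smooth_g]])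

lemma ginv_eq: "y \<in> U \<Longrightarrow> ginv A B C y = circulant_inv (A y) (B y) (C y)"
  unfolding ginv_def gmat_circulant using metric_pos[of y] by (intro matrix_inv_circulant) auto

lemma differentiable_ginv: "p \<in> U \<Longrightarrow> (\<lambda>y. ginv A B C y $ m $ n) differentiable (at p)"
proof -
  assume "p \<in> U"
  have "A y + 2 * B y + C y \<noteq> 0" "A y - C y \<noteq> 0" "A y - 2 * B y + C y \<noteq> 0" if "y \<in> U" for y
    using metric_pos[OF that] by auto
  then have "(\<lambda>y. circulant_inv (A y) (B y) (C y) $ m $ n) differentiable (at p)"
    using \<open>p \<in> U\<close> smooth_on_differentiable[OF smooth_A] smooth_on_differentiable[OF smooth_B]
      smooth_on_differentiable[OF smooth_C]
    unfolding circulant_inv_def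
    by (intro differentiable_circulant_entry) (auto intro!: derivative_intros)
  then obtain D where "((\<lambda>y. circulant_inv (A y) (B y) (C y) $ m $ n) has_derivative D) (at p)"
    unfolding differentiable_def by blast
  then have "((\<lambda>y. ginv A B C y $ m $ n) has_derivative D) (at p)"
    by (rule has_derivative_transform_within_open[OF _ open_U \<open>p \<in> U\<close>]) (simp add: ginv_eq)
  then show ?thesis unfolding differentiable_def by blast
qed

lemma differentiable_christoffel1: "y \<in> U \<Longrightarrow> christoffel1 A B C i j l differentiable (at y)"
  unfolding christoffel1_def[abs_def]
  by (intro differentiable_divide differentiable_add differentiable_diff differentiable_pd_g
      differentiable_const) simp_all

lemma differentiable_christoffel: "y \<in> U \<Longrightarrow> christoffel A B C k i j differentiable (at y)"
  unfolding christoffel_eq[abs_def]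
  by (intro differentiable_sum ballI differentiable_mult differentiable_ginv differentiable_christoffel1)
    simp_all

lemma lower_christoffel:
  assumes "y \<in> U"
  shows "(\<Sum>m\<in>UNIV. christoffel A B C m j k y * g m l y) = christoffel1 A B C j k l y"
proof -
  have inv: "(\<Sum>m\<in>UNIV. g l m y * ginv A B C y $ m $ n) = (if l = n then 1 else 0)" for n
  proof -
    have "gmat A B C y ** ginv A B C y = mat 1"
      unfolding ginv_eq[OF assms] gmat_circulant using metric_pos[OF assms]
      by (intro circulant_mult_inv) auto
    then show ?thesis unfolding matrix_matrix_mult_def mat_def vec_eq_iff by simp
  qed
  have "(\<Sum>m\<in>UNIV. christoffel A B C m j k y * g m l y)
      = (\<Sum>n\<in>UNIV. \<Sum>m\<in>UNIV. christoffel1 A B C j k n y * (g l m y * ginv A B C y $ m $ n))"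
    unfolding christoffel_eq gmat_circulant
    by (subst sum.swap) (simp add: sum_distrib_right sum_distrib_left circulant_sym[of _ _ _ _ l] mult_ac)
  also have "\<dots> = christoffel1 A B C j k l y"
    by (simp add: sum_distrib_left[symmetric] inv if_distrib cong: if_cong)
  finally show ?thesis .
qed

lemma pd_lower_christoffel:
  assumes "p \<in> U"
  shows "(\<Sum>m\<in>UNIV. pd i (christoffel A B C m j k) p * g m l p)
           = pd i (christoffel1 A B C j k l) p - (\<Sum>m\<in>UNIV. christoffel A B C m j k p * pd i (g m l) p)"
proof -
  have "pd i (christoffel1 A B C j k l) p = pd i (\<lambda>y. \<Sum>m\<in>UNIV. christoffel A B C m j k y * g m l y) p"
    using lower_christoffel by (intro pd_transform_within_open[OF open_U assms]) simp
  also have "\<dots> = (\<Sum>m\<in>UNIV. pd i (christoffel A B C m j k) p * g m l p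
                                + christoffel A B C m j k p * pd i (g m l) p)"
    using assms
    by (simp add: pd_sum pd_mult differentiable_mult differentiable_christoffel differentiable_g)
  finally show ?thesis by (simp add: sum.distrib)
qed

lemma pd_christoffel1_swap:
  assumes "p \<in> U"
  shows "pd i (christoffel1 A B C j k l) p + pd i (christoffel1 A B C j l k) p
       = pd j (christoffel1 A B C i k l) p + pd j (christoffel1 A B C i l k) p"
proof -
  have pd_christoffel1: "pd i (christoffel1 A B C j k l) p
      = (pd i (pd j (g k l)) p + pd i (pd k (g j l)) p - pd i (pd l (g j k)) p) / 2" for i j k l
    unfolding christoffel1_def[abs_def] using assms
    by (simp add: pd_divide_const pd_add pd_diff differentiable_pd_g differentiable_add differentiable_diff)
  have "pd i (pd j (g k l)) p = pd j (pd i (g k l)) p"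
    using assms by (intro pd_commute[OF open_U]) (simp_all add: differentiable_g differentiable_pd_g)
  then show ?thesis
    unfolding pd_christoffel1 gmat_circulant circulant_sym[of _ _ _ l k] by (simp add: field_simps)
qed

end

section \<open>The curvature tensor\<close>

text \<open>
  The algebraic core of the antisymmetry of \<open>R\<^sub>i\<^sub>j\<^sub>k\<^sub>l\<close> in \<open>k, l\<close>: read \<open>\<Gamma> m j k\<close> as \<open>\<Gamma>\<^sup>m\<^sub>j\<^sub>k\<close>,
  \<open>L j k l\<close> as the Christoffel symbol of the first kind \<open>\<Gamma>\<^sub>j\<^sub>k\<^sub>l\<close>, and \<open>d\<Gamma> i\<close>, \<open>dg i\<close>, \<open>dL i\<close> as the
  partial derivatives \<open>\<partial>\<^sub>i\<close> of \<open>\<Gamma>\<close>, \<open>g\<close>, \<open>L\<close>.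
\<close>
lemma lowered_curvature_antisym:
  fixes g :: "'a::finite \<Rightarrow> 'a \<Rightarrow> real" and \<Gamma> L dg :: "'a \<Rightarrow> 'a \<Rightarrow> 'a \<Rightarrow> real"
    and d\<Gamma> dL :: "'a \<Rightarrow> 'a \<Rightarrow> 'a \<Rightarrow> 'a \<Rightarrow> real"
  assumes g_sym: "\<And>m l. g m l = g l m"
    and lower: "\<And>j k l. (\<Sum>m\<in>UNIV. \<Gamma> m j k * g m l) = L j k l"
    and pd_lower: "\<And>i j k l. (\<Sum>m\<in>UNIV. d\<Gamma> i m j k * g m l) = dL i j k l - (\<Sum>m\<in>UNIV. \<Gamma> m j k * dg i m l)"
    and compat: "\<And>i m l. dg i m l = L i m l + L i l m"
    and dL_swap: "\<And>i j k l. dL i j k l + dL i j l k = dL j i k l + dL j i l k"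
  defines "R i j k m \<equiv> d\<Gamma> i m j k - d\<Gamma> j m i k + (\<Sum>n\<in>UNIV. \<Gamma> n j k * \<Gamma> m i n - \<Gamma> n i k * \<Gamma> m j n)"
  shows "(\<Sum>m\<in>UNIV. R i j k m * g m l) + (\<Sum>m\<in>UNIV. R i j l m * g m k) = 0"
proof -
  define S where "S a b c d = (\<Sum>m\<in>UNIV. \<Sum>n\<in>UNIV. \<Gamma> m a b * \<Gamma> n c d * g n m)" for a b c d
  have S_sym: "S a b c d = S c d a b" for a b c d
    unfolding S_def by (subst sum.swap) (simp add: g_sym mult_ac)
  have quadratic: "(\<Sum>m\<in>UNIV. (\<Sum>n\<in>UNIV. \<Gamma> n a b * \<Gamma> m c n) * g m l) = (\<Sum>n\<in>UNIV. \<Gamma> n a b * L c n l)"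
    for a b c l
    unfolding lower[symmetric] sum_distrib_left sum_distrib_right
    by (subst sum.swap) (simp add: mult_ac)
  have S_eq: "(\<Sum>m\<in>UNIV. \<Gamma> m a b * L c d m) = S a b c d" for a b c d
    unfolding S_def lower[symmetric] by (simp add: sum_distrib_left mult_ac)
  have lowered: "(\<Sum>m\<in>UNIV. R i j k m * g m l) = dL i j k l - dL j i k l - S j k i l + S i k j l" for k l
  proof -
    have "(\<Sum>m\<in>UNIV. R i j k m * g m l)
      = (\<Sum>m\<in>UNIV. d\<Gamma> i m j k * g m l) - (\<Sum>m\<in>UNIV. d\<Gamma> j m i k * g m l)
        + (\<Sum>m\<in>UNIV. (\<Sum>n\<in>UNIV. \<Gamma> n j k * \<Gamma> m i n) * g m l)
        - (\<Sum>m\<in>UNIV. (\<Sum>n\<in>UNIV. \<Gamma> n i k * \<Gamma> m j n) * g m l)"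
      unfolding R_def by (simp add: sum_subtractf sum.distrib left_diff_distrib distrib_right)
    also have "\<dots> = dL i j k l - (\<Sum>m\<in>UNIV. \<Gamma> m j k * dg i m l) - (dL j i k l - (\<Sum>m\<in>UNIV. \<Gamma> m i k * dg j m l))
        + (\<Sum>n\<in>UNIV. \<Gamma> n j k * L i n l) - (\<Sum>n\<in>UNIV. \<Gamma> n i k * L j n l)"
      by (simp only: pd_lower quadratic)
    also have "\<dots> = dL i j k l - dL j i k l - (\<Sum>m\<in>UNIV. \<Gamma> m j k * L i l m) + (\<Sum>m\<in>UNIV. \<Gamma> m i k * L j l m)"
      by (simp add: compat distrib_left sum.distrib)
    also have "\<dots> = dL i j k l - dL j i k l - S j k i l + S i k j l"
      by (simp only: S_eq)
    finally show ?thesis .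
  qed
  show ?thesis unfolding lowered using S_sym[of j k i l] S_sym[of i k j l] dL_swap[of i j k l] by linarith
qed

definition curv_lower ::
  "(real^4 \<Rightarrow> real) \<Rightarrow> (real^4 \<Rightarrow> real) \<Rightarrow> (real^4 \<Rightarrow> real) \<Rightarrow> real^4 \<Rightarrow> 4 \<Rightarrow> 4 \<Rightarrow> 4 \<Rightarrow> 4 \<Rightarrow> real" where
  "curv_lower A B C p i j k l = (\<Sum>m\<in>UNIV. curv A B C i j k m p * gmat A B C p $ m $ l)"

lemma curv_antisym12: "curv A B C j i k l p = - curv A B C i j k l p"
  unfolding curv_def by (simp add: sum_subtractf)

lemma curv_lower_antisym12: "curv_lower A B C p j i k l = - curv_lower A B C p i j k l"
  unfolding curv_lower_def curv_antisym12[of A B C j i] by (simp add: sum_negf)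

lemma curv_lower_bianchi:
  "curv_lower A B C p i j k l + curv_lower A B C p j k i l + curv_lower A B C p k i j l = 0"
proof -
  have "curv A B C i j k m p + curv A B C j k i m p + curv A B C k i j m p = 0" for m
    unfolding curv_def christoffel_commute[of A B C _ k i] christoffel_commute[of A B C _ j i]
      christoffel_commute[of A B C _ k j]
    by (simp add: sum_subtractf)
  then show ?thesis
    unfolding curv_lower_def by (simp flip: sum.distrib distrib_right)
qed

lemma (in circulant_metric) curv_lower_antisym34:
  assumes "p \<in> U"
  shows "curv_lower A B C p i j l k = - curv_lower A B C p i j k l"
proof -
  have "g m l p = g l m p" for m l
    unfolding gmat_circulant by (rule circulant_sym)
  from lowered_curvature_antisym[where i = i and j = j and k = k and l = l and g = "\<lambda>m l. g m l p" and \<Gamma> = "\<lambda>m j k. christoffel A B C m j k p"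
      and d\<Gamma> = "\<lambda>i m j k. pd i (christoffel A B C m j k) p" and dg = "\<lambda>i m l. pd i (g m l) p"
      and L = "\<lambda>j k l. christoffel1 A B C j k l p" and dL = "\<lambda>i j k l. pd i (christoffel1 A B C j k l) p",
      OF this lower_christoffel[OF assms] pd_lower_christoffel[OF assms] pd_gmat_eq_christoffel1
      pd_christoffel1_swap[OF assms]]
  show ?thesis unfolding curv_lower_def curv_def by linarith
qed

definition algebraic_curvature :: "('a \<Rightarrow> 'a \<Rightarrow> 'a \<Rightarrow> 'a \<Rightarrow> real) \<Rightarrow> bool" where
  "algebraic_curvature T \<longleftrightarrow>
     (\<forall>i j k l. T j i k l = - T i j k l) \<and> (\<forall>i j k l. T i j l k = - T i j k l)
     \<and> (\<forall>i j k l. T i j k l + T j k i l + T k i j l = 0)"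

lemma algebraic_curvature_pair_sym:
  assumes "algebraic_curvature T"
  shows "T k l i j = T i j k l"
proof -
  have a12: "\<And>i j k l. T j i k l = - T i j k l" and a34: "\<And>i j k l. T i j l k = - T i j k l"
    and b: "\<And>i j k l. T i j k l + T j k i l + T k i j l = 0"
    using assms unfolding algebraic_curvature_def by blast+
  show ?thesis
    using b[of i j k l] b[of j k l i] b[of k l i j] b[of l i j k]
      a34[of j k i l] a34[of k l i j] a12[of j l k i] a34[of j l i k] a12[of i l k j] a34[of i l j k]
      a34[of i k j l] a12[of i l j k] a34[of i j k l] a12[of i k j l]
    by linarith
qed

lemma (in circulant_metric) algebraic_curvature_curv_lower:
  "p \<in> U \<Longrightarrow> algebraic_curvature (curv_lower A B C p)"
  unfolding algebraic_curvature_def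
  by (intro conjI allI curv_lower_antisym12 curv_lower_antisym34 curv_lower_bianchi)

definition form4 :: "('n::finite \<Rightarrow> 'n \<Rightarrow> 'n \<Rightarrow> 'n \<Rightarrow> real) \<Rightarrow> real^'n \<Rightarrow> real^'n \<Rightarrow> real^'n \<Rightarrow> real^'n \<Rightarrow> real" where
  "form4 T x y z u = (\<Sum>(i, j, k, l)\<in>UNIV. x$i * y$j * z$k * u$l * T i j k l)"

lemma form4_uminus: "form4 (\<lambda>i j k l. - T i j k l) x y z u = - form4 T x y z u"
  unfolding form4_def by (simp add: case_prod_unfold sum_negf)

lemma form4_swap12: "form4 T y x z u = form4 (\<lambda>i j k l. T j i k l) x y z u"
  unfolding form4_def
  by (rule sum.reindex_bij_witness[where i = "\<lambda>(i, j, k, l). (j, i, k, l)" and j = "\<lambda>(i, j, k, l). (j, i, k, l)"])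
    (simp_all add: case_prod_unfold mult_ac)

lemma form4_swap34: "form4 T x y u z = form4 (\<lambda>i j k l. T i j l k) x y z u"
  unfolding form4_def
  by (rule sum.reindex_bij_witness[where i = "\<lambda>(i, j, k, l). (i, j, l, k)" and j = "\<lambda>(i, j, k, l). (i, j, l, k)"])
    (simp_all add: case_prod_unfold mult_ac)

lemma form4_swap_pairs: "form4 T z u x y = form4 (\<lambda>i j k l. T k l i j) x y z u"
  unfolding form4_def
  by (rule sum.reindex_bij_witness[where i = "\<lambda>(i, j, k, l). (k, l, i, j)" and j = "\<lambda>(i, j, k, l). (k, l, i, j)"])
    (simp_all add: case_prod_unfold mult_ac)

lemma form4_qact34: "form4 T x y (qact z) (qact u) = form4 (\<lambda>i j k l. T i j (k + 1) (l + 1)) x y z u"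
  unfolding form4_def qact_nth
  by (rule sum.reindex_bij_witness[where i = "\<lambda>(i, j, k, l). (i, j, k + 1, l + 1)" and j = "\<lambda>(i, j, k, l). (i, j, k - 1, l - 1)"])
    (simp_all add: case_prod_unfold)

context
  fixes T :: "'n::finite \<Rightarrow> 'n \<Rightarrow> 'n \<Rightarrow> 'n \<Rightarrow> real"
  assumes T: "algebraic_curvature T"
begin

lemma form4_antisym12: "form4 T y x z u = - form4 T x y z u"
proof -
  have "(\<lambda>i j k l. T j i k l) = (\<lambda>i j k l. - T i j k l)"
    using T unfolding algebraic_curvature_def by (intro ext) (elim conjE allE)
  then show ?thesis by (subst form4_swap12) (simp only: form4_uminus)
qed

lemma form4_antisym34: "form4 T x y u z = - form4 T x y z u"
proof -
  have "(\<lambda>i j k l. T i j l k) = (\<lambda>i j k l. - T i j k l)"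
    using T unfolding algebraic_curvature_def by (intro ext) (elim conjE allE)
  then show ?thesis by (subst form4_swap34) (simp only: form4_uminus)
qed

lemma form4_pair_sym: "form4 T z u x y = form4 T x y z u"
proof -
  have "(\<lambda>i j k l. T k l i j) = T"
    by (intro ext algebraic_curvature_pair_sym[OF T])
  then show ?thesis by (subst form4_swap_pairs) (simp only:)
qed

end

lemma sum_UNIV_tuple4:
  "(\<Sum>(i, j, k, l)\<in>UNIV. f i j k l) = (\<Sum>i\<in>UNIV. \<Sum>j\<in>UNIV. \<Sum>k\<in>UNIV. \<Sum>l\<in>UNIV. f i j k l)"
  by (simp add: sum.cartesian_product UNIV_Times_UNIV[symmetric] del: UNIV_Times_UNIV)

lemma sum_UNIV_tuple5:
  "(\<Sum>(i, j, k, l, m)\<in>UNIV. f i j k l m)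
     = (\<Sum>i\<in>UNIV. \<Sum>j\<in>UNIV. \<Sum>k\<in>UNIV. \<Sum>l\<in>UNIV. \<Sum>m\<in>UNIV. f i j k l m)"
  by (simp add: sum.cartesian_product UNIV_Times_UNIV[symmetric] del: UNIV_Times_UNIV)

lemma sum_UNIV_rotate5:
  fixes F :: "'a::finite \<Rightarrow> 'b::finite \<Rightarrow> 'c::finite \<Rightarrow> 'd::finite \<Rightarrow> 'e::finite \<Rightarrow> 'r::comm_monoid_add"
  shows "(\<Sum>l\<in>UNIV. \<Sum>m\<in>UNIV. \<Sum>i\<in>UNIV. \<Sum>j\<in>UNIV. \<Sum>k\<in>UNIV. F i j k m l)
       = (\<Sum>i\<in>UNIV. \<Sum>j\<in>UNIV. \<Sum>k\<in>UNIV. \<Sum>m\<in>UNIV. \<Sum>l\<in>UNIV. F i j k m l)"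
  unfolding sum_UNIV_tuple5[symmetric]
  by (rule sum.reindex_bij_witness[where i = "\<lambda>(i, j, k, m, l). (l, m, i, j, k)" and j = "\<lambda>(l, m, i, j, k). (i, j, k, m, l)"])
    auto

lemma R4_eq_form4: "R4 A B C p x y z u = form4 (curv_lower A B C p) x y z u"
proof -
  have "R4 A B C p x y z u
      = (\<Sum>l\<in>UNIV. \<Sum>m\<in>UNIV. \<Sum>i\<in>UNIV. \<Sum>j\<in>UNIV. \<Sum>k\<in>UNIV. x$i * y$j * z$k * u$m * (curv A B C i j k l p * gmat A B C p $ l $ m))"
    unfolding R4_def gform_def by (simp add: sum_distrib_left sum_distrib_right mult_ac)
  also have "\<dots> = (\<Sum>i\<in>UNIV. \<Sum>j\<in>UNIV. \<Sum>k\<in>UNIV. \<Sum>m\<in>UNIV. \<Sum>l\<in>UNIV. x$i * y$j * z$k * u$m * (curv A B C i j k l p * gmat A B C p $ l $ m))"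
    by (rule sum_UNIV_rotate5)
  also have "\<dots> = form4 (curv_lower A B C p) x y z u"
    unfolding form4_def sum_UNIV_tuple4 curv_lower_def by (simp add: sum_distrib_left)
  finally show ?thesis .
qed

lemma form4_qact_pow34:
  assumes "\<And>i j k l. T i j (k + 1) (l + 1) = T i j k l"
  shows "form4 T x y ((qact ^^ n) z) ((qact ^^ n) u) = form4 T x y z u"
proof (induction n)
  case (Suc n)
  have "(\<lambda>i j k l. T i j (k + 1) (l + 1)) = T"
    using assms by (intro ext) simp
  with Suc show ?case by (simp add: form4_qact34)
qed simp

lemma form4_qact_invariant:
  assumes "algebraic_curvature T" and "\<And>i j k l. T i j (k + 1) (l + 1) = T i j k l"
  shows "form4 T (qact x) (qact y) (qact z) (qact u) = form4 T x y z u"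
proof -
  have shift: "form4 T a b (qact c) (qact d) = form4 T a b c d" for a b c d
    using form4_qact_pow34[where T = T and n = 1, OF assms(2)] by simp
  have "form4 T (qact x) (qact y) (qact z) (qact u) = form4 T z u (qact x) (qact y)"
    by (simp only: shift form4_pair_sym[OF assms(1)])
  also have "\<dots> = form4 T x y z u"
    by (simp only: shift form4_pair_sym[OF assms(1)])
  finally show ?thesis .
qed

section \<open>Sectional curvatures\<close>

lemma (in circulant_metric) sectional_commute:
  assumes "p \<in> U"
  shows "sectional A B C p y x = sectional A B C p x y"
proof -
  note T = algebraic_curvature_curv_lower[OF assms]
  have "form4 (curv_lower A B C p) y x y x = form4 (curv_lower A B C p) x y x y"
    unfolding form4_antisym12[OF T, of y x] form4_antisym34[OF T, of x y y] by simp
  then show ?thesis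
    unfolding sectional_def R4_eq_form4 gform_commute[of A B C p y x] by (simp add: mult.commute)
qed

lemma nabla_q_eq:
  "nabla_q A B C k i j y = christoffel A B C j k (i + 1) y - christoffel A B C (j - 1) k i y"
proof -
  have "(j = m + 1) = (m = j - 1)" for m :: 4 by auto
  then have "(\<Sum>m\<in>UNIV. christoffel A B C m k i y * qcomp m j) = christoffel A B C (j - 1) k i y"
    unfolding qcomp_def by (simp add: if_distrib cong: if_cong)
  moreover have "(\<Sum>m\<in>UNIV. christoffel A B C j k m y * qcomp i m) = christoffel A B C j k (i + 1) y"
    unfolding qcomp_def by (simp add: if_distrib cong: if_cong)
  ultimately show ?thesis
    unfolding nabla_q_def pd_const by simp
qed

locale parallel_affinor = circulant_metric +
  assumes nabla_q_zero: "\<And>y k i j. y \<in> U \<Longrightarrow> nabla_q A B C k i j y = 0"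
begin

lemma christoffel_shift: "y \<in> U \<Longrightarrow> christoffel A B C (l + 1) k (i + 1) y = christoffel A B C l k i y"
  using nabla_q_zero[of y k i "l + 1"] unfolding nabla_q_eq by simp

lemma curv_shift:
  assumes "p \<in> U"
  shows "curv A B C i j (k + 1) (l + 1) p = curv A B C i j k l p"
proof -
  have "pd a (christoffel A B C (l + 1) b (k + 1)) p = pd a (christoffel A B C l b k) p" for a b
    by (rule pd_transform_within_open[OF open_U assms]) (rule christoffel_shift)
  moreover have
    "(\<Sum>m\<in>UNIV. christoffel A B C m j (k + 1) p * christoffel A B C (l + 1) i m p
                - christoffel A B C m i (k + 1) p * christoffel A B C (l + 1) j m p)
   = (\<Sum>m\<in>UNIV. christoffel A B C m j k p * christoffel A B C l i m p
                - christoffel A B C m i k p * christoffel A B C l j m p)"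
    by (subst sum_UNIV_shift[where a = 1]) (simp only: christoffel_shift[OF assms])
  ultimately show ?thesis unfolding curv_def by simp
qed

lemma curv_lower_shift: "p \<in> U \<Longrightarrow> curv_lower A B C p i j (k + 1) (l + 1) = curv_lower A B C p i j k l"
  unfolding curv_lower_def gmat_circulant
  by (subst sum_UNIV_shift[where a = 1]) (simp add: curv_shift circulant_shift)

lemma sectional_qact:
  assumes "p \<in> U"
  shows "sectional A B C p (qact x) (qact y) = sectional A B C p x y"
  unfolding sectional_def R4_eq_form4 gform_qact
    form4_qact_invariant[OF algebraic_curvature_curv_lower[OF assms] curv_lower_shift[OF assms]] ..

lemma sectional_qact2_vanish:
  assumes "p \<in> U"
  shows "sectional A B C p x ((qact ^^ 2) x) = 0"
proof -
  let ?T = "curv_lower A B C p" and ?y = "(qact ^^ 2) x"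
  have "(qact ^^ 2) ?y = x"
    using qact_pow4[of x] by (simp add: numeral_eq_Suc)
  then have "form4 ?T x ?y x ?y = form4 ?T x ?y ?y x"
    using form4_qact_pow34[where T = ?T and n = 2, OF curv_lower_shift[OF assms]] by metis
  also have "\<dots> = - form4 ?T x ?y x ?y"
    by (rule form4_antisym34[OF algebraic_curvature_curv_lower[OF assms]])
  finally show ?thesis
    unfolding sectional_def R4_eq_form4 by simp
qed

end

theorem theorem3p1:
  fixes U :: "(real^4) set" and A B C :: "real^4 \<Rightarrow> real" and p x :: "real^4"
  assumes "open U"
    and "smooth_on U A" and "smooth_on U B" and "smooth_on U C"
    and "\<forall>y\<in>U. 0 < B y \<and> B y < C y \<and> C y < A y"
    and "\<forall>y\<in>U. \<forall>k i j. nabla_q A B C k i j y = 0"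
    and "p \<in> U"
    and "((x$1 - x$3)\<^sup>2 + (x$2 - x$4)\<^sup>2) * (x$1 - x$2 + x$3 - x$4) * (x$1 + x$2 + x$3 + x$4) \<noteq> 0"
  shows "sectional A B C p x (qact x) = sectional A B C p ((qact^^3) x) x
       \<and> sectional A B C p ((qact^^3) x) x = sectional A B C p ((qact^^2) x) (qact x)
       \<and> sectional A B C p ((qact^^2) x) (qact x) = sectional A B C p ((qact^^2) x) ((qact^^3) x)
       \<and> sectional A B C p x ((qact^^2) x) = 0
       \<and> sectional A B C p ((qact^^3) x) (qact x) = 0"
proof -
  interpret parallel_affinor U A B C
    using assms(1-6) by unfold_locales auto
  let ?K = "sectional A B C p"
  define x1 x2 x3 where "x1 = qact x" and "x2 = qact x1" and "x3 = qact x2"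
  have pows: "(qact ^^ 2) x = x2" "(qact ^^ 3) x = x3" "(qact ^^ 2) x3 = x1"
    using qact_pow4[of x] by (simp_all add: x1_def x2_def x3_def numeral_eq_Suc)
  have "qact x3 = x"
    using qact_pow4[of x] by (simp add: x1_def x2_def x3_def numeral_eq_Suc)
  then have "?K x x1 = ?K x3 x" "?K x3 x = ?K x2 x1" "?K x2 x1 = ?K x2 x3"
    using sectional_qact[OF assms(7)] sectional_commute[OF assms(7)] unfolding x1_def x2_def x3_def
    by metis+
  moreover have "?K x x2 = 0" "?K x3 x1 = 0"
    using sectional_qact2_vanish[OF assms(7), of x] sectional_qact2_vanish[OF assms(7), of x3]
    unfolding pows by simp_all
  ultimately show ?thesis
    unfolding pows x1_def[symmetric] by simp
qed

end
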